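(* Let $n\ge 1$, let $x_1<x_2<\dots<x_n$ be real numbers and $m_1,\dots,m_n>0$, and define $s_k=\sum_{j=1}^n m_j x_j^k$ for $k=0,1,2,\dots$. Let $D_{n-1}=\det(s_{i+j})_{0\le i,j\le n-1}$. Let $p\ge 1$ be an integer and let $(a_{i,j})_{0\le i,j\le n+p}$ be a real $(n+p+1)\times(n+p+1)$ matrix such that $a_{i,j}=s_{i+j}$ whenever $i+j\le 2n+p-1$, while the entries with $i+j\ge 2n+p$ are arbitrary real numbers. Write $y_j=a_{n+j,\,n+p-j}$ for $j=0,1,\dots,p$ (these are exactly the entries with $i+j=2n+p$). Then $$\det(a_{i,j})_{0\le i,j\le n+p}=(-1)^{p(p+1)/2}\,D_{n-1}\prod_{j=0}^{p}\bigl(y_j-s_{2n+p}\bigr).$$ In particular, this determinant does not depend on the entries $a_{i,j}$ with $i+j\ge 2n+p+1$.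
   Context: Here $s_{2n+p}=\sum_{j=1}^n m_j x_j^{2n+p}$ is the moment of the discrete measure, not an entry of the matrix. *)

theory Defs
  imports "Jordan_Normal_Form.Determinant"
begin

definition moment :: "nat \<Rightarrow> (nat \<Rightarrow> real) \<Rightarrow> (nat \<Rightarrow> real) \<Rightarrow> nat \<Rightarrow> real" where
  "moment n m x k = (\<Sum>j=1..n. m j * x j ^ k)"

end

theory Submission
  imports Defs "HOL-Computational_Algebra.Polynomial"
begin

text \<open>Let c_0, ..., c_n be the coefficients of the monic polynomial q(t) = (t - x_1)...(t - x_n).
  Since q vanishes at every node, the moments satisfy the linear recurrence
  c_0 s_l + ... + c_n s_(n+l) = 0 for every l. Adding to each column j >= n of the matrix the
  combination of columns j-n, ..., j-1 with weights c_0, ..., c_(n-1) is a unimodular column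
  operation; it kills every entry of the new column that only involves known moments (i + j < 2n + p),
  and on the anti-diagonal i + j = 2n + p it leaves a_(i,j) - s_(2n+p). The result is block lower
  triangular, with the Hankel matrix of D_(n-1) in the corner and an anti-triangular block of size
  p + 1, whose determinant is the signed product of its anti-diagonal.\<close>

lemma det_anti_upper_triangular:
  fixes D :: "'a :: comm_ring_1 mat"
  assumes "D \<in> carrier_mat (Suc k) (Suc k)"
    and "\<And>a b. a < Suc k \<Longrightarrow> b < Suc k \<Longrightarrow> a + b < k \<Longrightarrow> D $$ (a, b) = 0"
  shows "det D = (-1) ^ (k * (k + 1) div 2) * (\<Prod>j=0..k. D $$ (j, k - j))"
  using assms
proof (induction k arbitrary: D)
  case 0
  have "det D = D $$ (0, 0) * cofactor D 0 0"
    using laplace_expansion_row[OF 0(1)] by simp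
  also have "cofactor D 0 0 = 1"
    unfolding cofactor_def using det_dim_zero[OF mat_delete_carrier[OF 0(1), simplified]] by simp
  finally show ?case by simp
next
  case (Suc k)
  define E where "E = mat_delete D 0 (Suc k)"
  have E_carrier: "E \<in> carrier_mat (Suc k) (Suc k)"
    unfolding E_def using mat_delete_carrier[OF Suc(2)] by simp
  have E_entry: "E $$ (a, b) = D $$ (Suc a, b)" if "a < Suc k" "b < Suc k" for a b
    using that Suc(2) unfolding E_def mat_delete_def by auto
  text \<open>Only the last entry of the first row is nonzero.\<close>
  have "det D = (\<Sum>j<Suc (Suc k). D $$ (0, j) * cofactor D 0 j)"
    using laplace_expansion_row[OF Suc(2)] by simp
  also have "\<dots> = D $$ (0, Suc k) * (-1) ^ Suc k * det E"
    using Suc(3) by (simp add: sum.lessThan_Suc[of _ "Suc k"] cofactor_def E_def)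
  also have "det E = (-1) ^ (k * (k + 1) div 2) * (\<Prod>j=0..k. D $$ (Suc j, Suc k - Suc j))"
    by (subst Suc(1)[OF E_carrier]) (auto simp: E_entry Suc(3) intro!: prod.cong)
  also have "(\<Prod>j=0..k. D $$ (Suc j, Suc k - Suc j)) = (\<Prod>j=Suc 0..Suc k. D $$ (j, Suc k - j))"
    by (rule prod.shift_bounds_cl_Suc_ivl[symmetric])
  also have "Suc k * (Suc k + 1) div 2 = Suc k + k * (k + 1) div 2"
    by (simp add: algebra_simps)
  ultimately show ?case
    by (simp add: prod.atLeast_Suc_atMost power_add)
qed

text \<open>Right multiplication by this unit upper triangular matrix keeps the first n columns and
  replaces column j >= n by the combination of columns j-n, ..., j with weights c_0, ..., c_n.\<close>
definition recurrence_mat :: "nat \<Rightarrow> nat \<Rightarrow> (nat \<Rightarrow> 'a :: comm_ring_1) \<Rightarrow> 'a mat" where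
  "recurrence_mat N n c = mat N N (\<lambda>(r, j).
     if j < n then of_bool (r = j) else if j - n \<le> r then c (r - (j - n)) else 0)"

lemma recurrence_mat_carrier: "recurrence_mat N n c \<in> carrier_mat N N"
  unfolding recurrence_mat_def by simp

lemma det_recurrence_mat:
  assumes "c n = 1" and "\<And>k. n < k \<Longrightarrow> c k = 0"
  shows "det (recurrence_mat N n c) = 1"
proof -
  have "upper_triangular (recurrence_mat N n c)"
    unfolding upper_triangular_def recurrence_mat_def by (auto intro!: assms(2))
  then have "det (recurrence_mat N n c) = prod_list (diag_mat (recurrence_mat N n c))"
    using det_upper_triangular recurrence_mat_carrier by blast
  also have "diag_mat (recurrence_mat N n c) = map (\<lambda>i. 1) [0..<N]"
    unfolding diag_mat_def recurrence_mat_def by (auto simp: assms(1))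
  finally show ?thesis by (simp add: map_replicate_const)
qed

lemma mult_recurrence_mat_low:
  assumes "A \<in> carrier_mat N N" and "i < N" and "j < N" and "j < n"
  shows "(A * recurrence_mat N n c) $$ (i, j) = A $$ (i, j)"
proof -
  have "(A * recurrence_mat N n c) $$ (i, j) = (\<Sum>r<N. A $$ (i, r) * of_bool (r = j))"
    using assms by (simp add: scalar_prod_def recurrence_mat_def atLeast0LessThan)
  also have "\<dots> = A $$ (i, j)"
    using assms(3) by (simp add: sum.If_cases lessThan_def Collect_conj_eq[symmetric] cong: conj_cong)
  finally show ?thesis .
qed

lemma mult_recurrence_mat_high:
  assumes "A \<in> carrier_mat N N" and "i < N" and "j < N" and "n \<le> j"
    and "\<And>k. n < k \<Longrightarrow> c k = 0"
  shows "(A * recurrence_mat N n c) $$ (i, j) = (\<Sum>k=0..n. c k * A $$ (i, j - n + k))"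
proof -
  have "(A * recurrence_mat N n c) $$ (i, j)
      = (\<Sum>r\<in>{0..<N}. if j - n \<le> r then A $$ (i, r) * c (r - (j - n)) else 0)"
    using assms by (auto simp: scalar_prod_def recurrence_mat_def intro!: sum.cong)
  also have "\<dots> = (\<Sum>r\<in>{0 + (j - n)..n + (j - n)}. A $$ (i, r) * c (r - (j - n)))"
    by (rule sum.mono_neutral_cong_right) (use assms in auto)
  also have "\<dots> = (\<Sum>k=0..n. c k * A $$ (i, j - n + k))"
    by (subst sum.shift_bounds_cl_nat_ivl) (simp add: add.commute mult.commute)
  finally show ?thesis .
qed

locale hankel_extension =
  fixes n p :: nat and s c :: "nat \<Rightarrow> 'a :: idom" and A :: "'a mat"
  assumes monic: "c n = 1"
    and coeff_vanish: "\<And>k. n < k \<Longrightarrow> c k = 0"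
    and recurrence: "\<And>l. (\<Sum>k=0..n. c k * s (k + l)) = 0"
    and carrier: "A \<in> carrier_mat (n + p + 1) (n + p + 1)"
    and hankel: "\<And>i j. i \<le> n + p \<Longrightarrow> j \<le> n + p \<Longrightarrow> i + j < 2 * n + p \<Longrightarrow> A $$ (i, j) = s (i + j)"
begin

abbreviation B :: "'a mat" where
  "B \<equiv> A * recurrence_mat (n + p + 1) n c"

lemma B_high:
  assumes "i \<le> n + p" and "j \<le> n + p" and "n \<le> j"
  shows "B $$ (i, j) = (\<Sum>k=0..n. c k * A $$ (i, j - n + k))"
  using mult_recurrence_mat_high[OF carrier] assms coeff_vanish by simp

lemma B_high_eq_0:
  assumes "i \<le> n + p" and "j \<le> n + p" and "n \<le> j" and "i + j < 2 * n + p"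
  shows "B $$ (i, j) = 0"
proof -
  have "B $$ (i, j) = (\<Sum>k=0..n. c k * s (k + (i + j - n)))"
    unfolding B_high[OF assms(1-3)]
  proof (intro sum.cong refl)
    fix k assume "k \<in> {0..n}"
    moreover have "i + (j - n + k) = k + (i + j - n)"
      using assms by simp
    ultimately show "c k * A $$ (i, j - n + k) = c k * s (k + (i + j - n))"
      using assms hankel[of i "j - n + k"] by simp
  qed
  then show ?thesis by (simp add: recurrence)
qed

lemma B_anti_diagonal:
  assumes "i \<le> n + p" and "j \<le> n + p" and "n \<le> j" and "i + j = 2 * n + p"
  shows "B $$ (i, j) = A $$ (i, j) - s (2 * n + p)"
proof -
  have known: "(\<Sum>k<n. c k * A $$ (i, j - n + k)) = (\<Sum>k<n. c k * s (k + (n + p)))"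
  proof (intro sum.cong refl)
    fix k assume "k \<in> {..<n}"
    moreover have "i + (j - n + k) = k + (n + p)"
      using assms by simp
    ultimately show "c k * A $$ (i, j - n + k) = c k * s (k + (n + p))"
      using assms hankel[of i "j - n + k"] by simp
  qed
  have "(\<Sum>k<n. c k * s (k + (n + p))) + s (2 * n + p) = 0"
    using recurrence[of "n + p"] monic
    by (simp add: atLeast0AtMost lessThan_Suc_atMost[symmetric] mult_2 add.assoc)
  moreover have "B $$ (i, j) = (\<Sum>k<n. c k * A $$ (i, j - n + k)) + A $$ (i, j)"
    unfolding B_high[OF assms(1-3)] using assms(3) monic
    by (simp add: atLeast0AtMost lessThan_Suc_atMost[symmetric])
  ultimately show ?thesis
    unfolding known by (simp add: eq_neg_iff_add_eq_0 eq_diff_eq)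
qed

lemma det_hankel_extension:
  "det A = (-1) ^ (p * (p + 1) div 2) * det (mat n n (\<lambda>(i, j). s (i + j)))
     * (\<Prod>j=0..p. A $$ (n + j, n + p - j) - s (2 * n + p))"
proof -
  define H where "H = mat n n (\<lambda>(i, j). s (i + j))"
  define C where "C = mat (p + 1) n (\<lambda>(i, j). B $$ (n + i, j))"
  define D where "D = mat (p + 1) (p + 1) (\<lambda>(i, j). B $$ (n + i, n + j))"
  have B_blocks: "B = four_block_mat H (0\<^sub>m n (p + 1)) C D"
  proof (rule eq_matI)
    fix i j assume "i < dim_row (four_block_mat H (0\<^sub>m n (p + 1)) C D)"
      and "j < dim_col (four_block_mat H (0\<^sub>m n (p + 1)) C D)"
    then have "i \<le> n + p" and "j \<le> n + p"
      by (auto simp: H_def D_def)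
    moreover have "B $$ (i, j) = 0" if "i < n" and "n \<le> j"
      using that \<open>j \<le> n + p\<close> by (intro B_high_eq_0) auto
    ultimately show "B $$ (i, j) = four_block_mat H (0\<^sub>m n (p + 1)) C D $$ (i, j)"
      using carrier by (auto simp: H_def C_def D_def mult_recurrence_mat_low hankel)
  qed (use carrier recurrence_mat_carrier in \<open>auto simp: H_def D_def\<close>)
  have "det B = det H * det D"
    unfolding B_blocks by (rule det_four_block_mat_upper_right_zero) (auto simp: H_def C_def D_def)
  moreover have "det B = det A"
    using det_mult[OF carrier recurrence_mat_carrier] det_recurrence_mat[of c n, OF monic coeff_vanish]
    by simp
  moreover have "det D = (-1) ^ (p * (p + 1) div 2) * (\<Prod>j=0..p. D $$ (j, p - j))"
    by (rule det_anti_upper_triangular) (auto simp: D_def intro!: B_high_eq_0[simplified])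
  moreover have "(\<Prod>j=0..p. D $$ (j, p - j)) = (\<Prod>j=0..p. A $$ (n + j, n + p - j) - s (2 * n + p))"
    by (intro prod.cong refl) (auto simp: D_def intro!: B_anti_diagonal[simplified])
  ultimately show ?thesis
    unfolding H_def by (simp add: mult.assoc mult.left_commute)
qed

end

definition node_poly :: "nat \<Rightarrow> (nat \<Rightarrow> 'a :: comm_ring_1) \<Rightarrow> 'a poly" where
  "node_poly n x = (\<Prod>j=1..n. [:- x j, 1:])"

lemma degree_node_poly: "degree (node_poly n (x :: nat \<Rightarrow> 'a :: idom)) = n"
  unfolding node_poly_def by (subst degree_prod_eq_sum_degree) auto

lemma coeff_node_poly_degree: "coeff (node_poly n (x :: nat \<Rightarrow> 'a :: idom)) n = 1"
  using lead_coeff_prod[of "\<lambda>j. [:- x j, 1:]" "{1..n}"] degree_node_poly[of n x]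
  unfolding node_poly_def by simp

lemma poly_node_poly_node: "1 \<le> j \<Longrightarrow> j \<le> n \<Longrightarrow> poly (node_poly n x) (x j) = 0"
  unfolding node_poly_def poly_prod by (rule prod_zero) auto

lemma moment_annihilated:
  assumes "\<And>j. 1 \<le> j \<Longrightarrow> j \<le> n \<Longrightarrow> poly q (x j) = 0"
  shows "(\<Sum>k\<le>degree q. coeff q k * moment n m x (k + l)) = 0"
proof -
  have "(\<Sum>k\<le>degree q. coeff q k * moment n m x (k + l)) = (\<Sum>j=1..n. m j * x j ^ l * poly q (x j))"
    unfolding moment_def sum_distrib_left poly_altdef
    by (subst sum.swap) (auto intro!: sum.cong simp: power_add algebra_simps)
  also have "\<dots> = 0"
    using assms by simp
  finally show ?thesis .
qed

theorem lemma2p3: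
  fixes n p :: nat and x m :: "nat \<Rightarrow> real" and A :: "real mat"
  assumes "n \<ge> 1" and "p \<ge> 1"
    and "\<And>i j. 1 \<le> i \<Longrightarrow> i < j \<Longrightarrow> j \<le> n \<Longrightarrow> x i < x j"
    and "\<And>j. 1 \<le> j \<Longrightarrow> j \<le> n \<Longrightarrow> m j > 0"
    and "A \<in> carrier_mat (n + p + 1) (n + p + 1)"
    and "\<And>i j. i \<le> n + p \<Longrightarrow> j \<le> n + p \<Longrightarrow> i + j \<le> 2 * n + p - 1 \<Longrightarrow>
            A $$ (i, j) = moment n m x (i + j)"
  shows "det A = (-1) ^ (p * (p + 1) div 2)
           * det (mat n n (\<lambda>(i, j). moment n m x (i + j)))
           * (\<Prod>j=0..p. A $$ (n + j, n + p - j) - moment n m x (2 * n + p))"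
proof -
  interpret hankel_extension n p "moment n m x" "coeff (node_poly n x)" A
  proof
    show "\<And>l. (\<Sum>k=0..n. coeff (node_poly n x) k * moment n m x (k + l)) = 0"
      using moment_annihilated[OF poly_node_poly_node]
      by (simp add: degree_node_poly atLeast0AtMost)
  qed (use assms(2,5,6) in \<open>auto simp: coeff_node_poly_degree degree_node_poly coeff_eq_0\<close>)
  show ?thesis by (rule det_hankel_extension)
qed

end
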